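(* Let $B\subset\mathbf{P}^4$ be a rational normal quartic, $V=\mathrm{Sec}\,B$, $\mathbf{P}^2=\mathrm{Hilb}_2(B)$, $V_z$ the line spanned by the degree-$2$ divisor $b_z$ of $z\in\mathbf{P}^2$, $G(1,4)\subset\mathbf{P}^9$ the Plücker embedded Grassmannian of lines of $\mathbf{P}^4$, and $Z\subset G(1,4)$ the image of $z\mapsto[V_z]$. Let $A\subset Z$ be the sextic curve corresponding to a general conic of $\mathbf{P}^2$, let $R'\subset\mathbf{P}^4$ be the union of the lines parametrized by $A$, and let $Q$ be the quadric through $B$ with $R'=V\cap Q$ (for general $A$, $Q$ is smooth). Let $W\subset G(1,4)$ be the tangential quadratic complex of $Q$, i.e. the variety of lines tangent to $Q$, and let $T=\langle A\rangle\cap G(1,4)$. Then $W$ does not contain $T$. *)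

theory Defs
  imports Complex_Main "HOL-Computational_Algebra.Polynomial"
begin

text \<open>Points of P^n are represented by their affine cones in C^(n+1):
  a vector is a function nat \<Rightarrow> complex whose coordinates with index \<ge> n+1 vanish.
  Binary forms of degree d in (s,t) are represented by univariate polynomials:
  coefficient j is the coefficient of s^(d-j) t^j.\<close>

definition pt5 :: "(nat \<Rightarrow> complex) \<Rightarrow> bool" where
  "pt5 x \<longleftrightarrow> (\<forall>i\<ge>5. x i = 0)"

definition invertible5 :: "(nat \<Rightarrow> nat \<Rightarrow> complex) \<Rightarrow> bool" where
  "invertible5 M \<longleftrightarrow> (\<forall>x. (\<forall>i<5. (\<Sum>j<5. M i j * x j) = 0) \<longrightarrow> (\<forall>j<5. x j = 0))"

text \<open>The rational normal quartic B: image of P^1 under (s:t) \<mapsto> (f_0(s,t):...:f_4(s,t)),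
  f_i = \<Sum>_j M i j s^(4-j) t^j, for a basis (f_i) of binary quartics (M invertible).\<close>
definition rnq_map :: "(nat \<Rightarrow> nat \<Rightarrow> complex) \<Rightarrow> complex \<Rightarrow> complex \<Rightarrow> nat \<Rightarrow> complex" where
  "rnq_map M s t = (\<lambda>i. if i < 5 then (\<Sum>j<5. M i j * s ^ (4 - j) * t ^ j) else 0)"

definition rnq :: "(nat \<Rightarrow> nat \<Rightarrow> complex) \<Rightarrow> (nat \<Rightarrow> complex) set" where
  "rnq M = {rnq_map M s t | s t. True}"

definition lin5 :: "(nat \<Rightarrow> complex) \<Rightarrow> (nat \<Rightarrow> complex) \<Rightarrow> complex" where
  "lin5 h x = (\<Sum>i<5. h i * x i)"

text \<open>Pull-back of the hyperplane h to P^1: the binary quartic h(f_0,...,f_4).\<close>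
definition pullback :: "(nat \<Rightarrow> nat \<Rightarrow> complex) \<Rightarrow> (nat \<Rightarrow> complex) \<Rightarrow> complex poly" where
  "pullback M h = Poly (map (\<lambda>j. \<Sum>i<5. h i * M i j) [0..<5])"

definition form_dvd :: "complex poly \<Rightarrow> complex poly \<Rightarrow> bool" where
  "form_dvd q f \<longleftrightarrow> (\<exists>r. degree r \<le> 2 \<and> f = q * r)"

text \<open>A point z = (a,b,c) \<noteq> 0 of P^2 = Hilb_2(B) is the degree-2 divisor b_z of B cut out by
  the binary quadric a s^2 + b s t + c t^2.  V_z is its linear span: the intersection of all
  hyperplanes containing b_z (those whose pull-back is divisible by the quadric).\<close>
definition Vz :: "(nat \<Rightarrow> nat \<Rightarrow> complex) \<Rightarrow> complex \<times> complex \<times> complex \<Rightarrow> (nat \<Rightarrow> complex) set" where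
  "Vz M z = (case z of (a, b, c) \<Rightarrow>
     {x. pt5 x \<and> (\<forall>h. form_dvd [:a, b, c:] (pullback M h) \<longrightarrow> lin5 h x = 0)})"

definition SecB :: "(nat \<Rightarrow> nat \<Rightarrow> complex) \<Rightarrow> (nat \<Rightarrow> complex) set" where
  "SecB M = (\<Union>z\<in>{z. z \<noteq> (0, 0, 0)}. Vz M z)"

definition plucker :: "(nat \<Rightarrow> complex) \<Rightarrow> (nat \<Rightarrow> complex) \<Rightarrow> nat \<times> nat \<Rightarrow> complex" where
  "plucker u v = (\<lambda>(i, j). if i < j \<and> j < 5 then u i * v j - u j * v i else 0)"

definition Zpt :: "(nat \<Rightarrow> nat \<Rightarrow> complex) \<Rightarrow> complex \<times> complex \<times> complex \<Rightarrow> (nat \<times> nat \<Rightarrow> complex) set" where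
  "Zpt M z = {plucker u v | u v. u \<in> Vz M z \<and> v \<in> Vz M z \<and> (\<exists>p. plucker u v p \<noteq> 0)}"

definition conic :: "(nat \<Rightarrow> complex) \<Rightarrow> (complex \<times> complex \<times> complex) set" where
  "conic k = {(a, b, c). (a, b, c) \<noteq> (0, 0, 0) \<and>
     k 0 * a^2 + k 1 * b^2 + k 2 * c^2 + k 3 * a * b + k 4 * a * c + k 5 * b * c = 0}"

definition Acurve :: "(nat \<Rightarrow> nat \<Rightarrow> complex) \<Rightarrow> (nat \<Rightarrow> complex) \<Rightarrow> (nat \<times> nat \<Rightarrow> complex) set" where
  "Acurve M k = (\<Union>z\<in>conic k. Zpt M z)"

definition Rprime :: "(nat \<Rightarrow> nat \<Rightarrow> complex) \<Rightarrow> (nat \<Rightarrow> complex) \<Rightarrow> (nat \<Rightarrow> complex) set" where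
  "Rprime M k = (\<Union>z\<in>conic k. Vz M z)"

definition lin_span :: "(nat \<times> nat \<Rightarrow> complex) set \<Rightarrow> (nat \<times> nat \<Rightarrow> complex) set" where
  "lin_span S = {w. \<exists>n (c :: nat \<Rightarrow> complex) f. (\<forall>i<n. f i \<in> S) \<and> w = (\<lambda>p. \<Sum>i<n. c i * f i p)}"

definition bil :: "(nat \<Rightarrow> nat \<Rightarrow> complex) \<Rightarrow> (nat \<Rightarrow> complex) \<Rightarrow> (nat \<Rightarrow> complex) \<Rightarrow> complex" where
  "bil S x y = (\<Sum>i<5. \<Sum>j<5. S i j * x i * y j)"

definition quadric :: "(nat \<Rightarrow> nat \<Rightarrow> complex) \<Rightarrow> bool" where
  "quadric S \<longleftrightarrow> (\<forall>i<5. \<forall>j<5. S i j = S j i) \<and> (\<exists>i<5. \<exists>j<5. S i j \<noteq> 0)"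

definition Qset :: "(nat \<Rightarrow> nat \<Rightarrow> complex) \<Rightarrow> (nat \<Rightarrow> complex) set" where
  "Qset S = {x. pt5 x \<and> bil S x x = 0}"

text \<open>The line spanned by independent u, v is tangent to Q (lies in the tangential quadratic
  complex W): the restriction of the quadratic form to the line is degenerate.\<close>
definition tangent_line :: "(nat \<Rightarrow> nat \<Rightarrow> complex) \<Rightarrow> (nat \<Rightarrow> complex) \<Rightarrow> (nat \<Rightarrow> complex) \<Rightarrow> bool" where
  "tangent_line S u v \<longleftrightarrow> bil S u u * bil S v v - (bil S u v)^2 = 0"

text \<open>A property holds for a general conic: it holds outside the zero locus of a nonzero
  polynomial in the six coefficients.\<close>
definition poly6 :: "((nat \<Rightarrow> complex) \<Rightarrow> complex) \<Rightarrow> bool" where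
  "poly6 F \<longleftrightarrow> (\<exists>N (coef :: nat \<Rightarrow> complex) (e :: nat \<Rightarrow> nat \<Rightarrow> nat).
      F = (\<lambda>k. \<Sum>m<N. coef m * (\<Prod>i<6. k i ^ e m i)))"

definition general_conic :: "((nat \<Rightarrow> complex) \<Rightarrow> bool) \<Rightarrow> bool" where
  "general_conic P \<longleftrightarrow> (\<exists>F. poly6 F \<and> (\<exists>k0. F k0 \<noteq> 0) \<and> (\<forall>k. F k \<noteq> 0 \<longrightarrow> P k))"

end

theory Submission
  imports Defs "HOL-Analysis.Analysis"
begin

text \<open>Write x = M y, so that B becomes the standard quartic y = (s^4 : s^3 t : ... : t^4) and the
  line V_z of z = (a, b, c) is cut out by the Hankel equations of the binary quadric
  a s^2 + b s t + c t^2.  In these coordinates the Gram matrix of a quadric through B has vanishing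
  anti-diagonal sums.  If the quadric also contains the two lines of A through each of the points
  (1 : 0 : ... : 0) and (0 : ... : 0 : 1) of B and one further line of A, then, for a general conic,
  its matrix is a nonzero multiple of an explicit matrix built from the coefficients of the conic.

  The two lines of A through (1 : 0 : ... : 0) span a plane, as do the two through
  (0 : ... : 0 : 1); these planes meet in a point P.  The Pluecker vector of the line joining P to
  (1 : 0 : ... : 0 : 1) is a combination of the Pluecker vectors of the four lines, hence lies in
  the span of A.  The Gram determinant of the quadratic form on that line is a nonzero square times
  a polynomial in the coefficients of the conic that does not vanish at (1, ..., 6), so for a
  general conic the line is not tangent to Q.  Only the inclusion R' \<subseteq> Q of the hypothesis
  is used.\<close>

lemma complex_quadratic_root:
  fixes a b c :: complex
  assumes "a \<noteq> 0"
  shows "\<exists>x. a * x^2 + b * x + c = 0"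
proof -
  have "a * ((- b + csqrt (b^2 - 4 * a * c)) / (2 * a))^2 + b * ((- b + csqrt (b^2 - 4 * a * c)) / (2 * a)) + c = 0"
    using assms by (simp add: field_simps power2_eq_square) algebra
  thus ?thesis by blast
qed

lemma complex_quadratic_two_nonzero_roots:
  fixes a b c :: complex
  assumes "a \<noteq> 0" "b^2 - 4 * a * c \<noteq> 0" "c \<noteq> 0"
  obtains x y where "x \<noteq> y" "x \<noteq> 0" "y \<noteq> 0" "a * x^2 + b * x + c = 0" "a * y^2 + b * y + c = 0"
proof -
  define s where "s = csqrt (b^2 - 4 * a * c)"
  define x where "x = (- b + s) / (2 * a)"
  define y where "y = (- b - s) / (2 * a)"
  have s2: "s^2 = b^2 - 4 * a * c" by (simp add: s_def)
  have "s \<noteq> 0" using assms(2) s2 by auto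
  hence "x \<noteq> y" using assms(1) by (simp add: x_def y_def field_simps)
  moreover have "a * x^2 + b * x + c = 0" "a * y^2 + b * y + c = 0"
    using assms(1) s2 unfolding x_def y_def by (simp_all add: field_simps power2_eq_square) algebra+
  moreover from this have "x \<noteq> 0" "y \<noteq> 0" using assms(3) by auto
  ultimately show ?thesis using that by blast
qed

lemma order2_recurrence_closed_form:
  fixes a b c r1 r2 :: "'a::field" and x :: "nat \<Rightarrow> 'a"
  assumes a: "a \<noteq> 0" and r: "r1 \<noteq> r2" "r1 \<noteq> 0" "r2 \<noteq> 0"
    and root1: "a * r1^2 + b * r1 + c = 0" and root2: "a * r2^2 + b * r2 + c = 0"
    and rec3: "a * x 3 + b * x 2 + c * x 1 = 0" and rec4: "a * x 4 + b * x 3 + c * x 2 = 0"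
  obtains p1 p2 where "x 1 = p1 * r1 + p2 * r2" "x 2 = p1 * r1^2 + p2 * r2^2"
    "x 3 = p1 * r1^3 + p2 * r2^3" "x 4 = p1 * r1^4 + p2 * r2^4"
proof -
  define D where "D = r1 * r2 * (r2 - r1)"
  have D: "D \<noteq> 0" using r by (simp add: D_def)
  define p1 where "p1 = (x 1 * r2^2 - x 2 * r2) / D"
  define p2 where "p2 = (x 2 * r1 - x 1 * r1^2) / D"
  have p: "p1 * D = x 1 * r2^2 - x 2 * r2" "p2 * D = x 2 * r1 - x 1 * r1^2"
    using D by (simp_all add: p1_def p2_def)
  have "D * x 1 = D * (p1 * r1 + p2 * r2)" "D * x 2 = D * (p1 * r1^2 + p2 * r2^2)"
    using p unfolding D_def by algebra+
  hence x1: "x 1 = p1 * r1 + p2 * r2" and x2: "x 2 = p1 * r1^2 + p2 * r2^2"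
    using D by simp_all
  have "a * x 3 = a * (p1 * r1^3 + p2 * r2^3)"
    using rec3 root1 root2 x1 x2 by algebra
  hence x3: "x 3 = p1 * r1^3 + p2 * r2^3" using a by simp
  have "a * x 4 = a * (p1 * r1^4 + p2 * r2^4)"
    using rec4 root1 root2 x2 x3 by algebra
  hence x4: "x 4 = p1 * r1^4 + p2 * r2^4" using a by simp
  show ?thesis using that x1 x2 x3 x4 .
qed

lemma quadratics_with_common_roots_proportional:
  fixes a b c d e f r1 r2 :: "'a::field"
  assumes a: "a \<noteq> 0" and r: "r1 \<noteq> r2"
    and "a * r1^2 + b * r1 + c = 0" "a * r2^2 + b * r2 + c = 0"
    and "d * r1^2 + e * r1 + f = 0" "d * r2^2 + e * r2 + f = 0"
  shows "e = d / a * b" "f = d / a * c"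
proof -
  have lin: "(d * b - a * e) * r + (d * c - a * f) = 0"
    if "a * r^2 + b * r + c = 0" "d * r^2 + e * r + f = 0" for r
    using that by algebra
  have "(d * b - a * e) * (r1 - r2) = 0"
    using lin[OF assms(3,5)] lin[OF assms(4,6)] by algebra
  hence "d * b = a * e" using r by simp
  moreover from this have "d * c = a * f" using lin[OF assms(3,5)] by algebra
  ultimately show "e = d / a * b" "f = d / a * c" using a by (simp_all add: field_simps)
qed

section \<open>Polynomials in the coefficients of a conic\<close>

lemma poly6_const: "poly6 (\<lambda>k. c)"
  unfolding poly6_def by (intro exI[of _ 1] exI[of _ "\<lambda>_. c"] exI[of _ "\<lambda>_ _. 0"]) simp

lemma poly6_coordinate:
  assumes "i < 6"
  shows "poly6 (\<lambda>k. k i)"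
proof -
  have "(\<Prod>j<6. k j ^ (if j = i then 1 else 0)) = k i" for k :: "nat \<Rightarrow> complex"
  proof -
    have "(\<Prod>j<6. k j ^ (if j = i then 1 else 0)) = (\<Prod>j<6. if j = i then k j else 1)"
      by (rule prod.cong) auto
    also have "\<dots> = k i" using assms by (simp add: prod.delta)
    finally show ?thesis .
  qed
  thus ?thesis
    unfolding poly6_def
    by (intro exI[of _ 1] exI[of _ "\<lambda>_. 1"] exI[of _ "\<lambda>_ j. if j = i then 1 else 0"]) simp
qed

lemma poly6_add:
  assumes "poly6 f" "poly6 g"
  shows "poly6 (\<lambda>k. f k + g k)"
proof -
  from assms obtain N1 N2 :: nat and c1 c2 :: "nat \<Rightarrow> complex" and e1 e2 :: "nat \<Rightarrow> nat \<Rightarrow> nat" where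
    f: "f = (\<lambda>k. \<Sum>m<N1. c1 m * (\<Prod>i<6. k i ^ e1 m i))" and
    g: "g = (\<lambda>k. \<Sum>m<N2. c2 m * (\<Prod>i<6. k i ^ e2 m i))"
    unfolding poly6_def by blast
  define c where "c = (\<lambda>m. if m < N1 then c1 m else c2 (m - N1))"
  define e where "e = (\<lambda>m. if m < N1 then e1 m else e2 (m - N1))"
  have "(\<Sum>m<N1 + N2. c m * (\<Prod>i<6. k i ^ e m i)) = f k + g k" for k
  proof -
    have "(\<Sum>m<N1 + N2. c m * (\<Prod>i<6. k i ^ e m i)) =
      (\<Sum>m\<in>{0..<N1}. c m * (\<Prod>i<6. k i ^ e m i)) + (\<Sum>m\<in>{N1..<N1+N2}. c m * (\<Prod>i<6. k i ^ e m i))"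
      by (simp add: atLeast0LessThan[symmetric] sum.atLeastLessThan_concat)
    also have "(\<Sum>m\<in>{0..<N1}. c m * (\<Prod>i<6. k i ^ e m i)) = f k"
      by (simp add: f c_def e_def atLeast0LessThan)
    also have "(\<Sum>m\<in>{N1..<N1+N2}. c m * (\<Prod>i<6. k i ^ e m i)) = g k"
      using sum.shift_bounds_nat_ivl[of "\<lambda>m. c m * (\<Prod>i<6. k i ^ e m i)" 0 N1 N2]
      by (simp add: g c_def e_def atLeast0LessThan add.commute)
    finally show ?thesis .
  qed
  thus ?thesis
    unfolding poly6_def by (intro exI[of _ "N1 + N2"] exI[of _ c] exI[of _ e]) (simp add: fun_eq_iff)
qed

lemma poly6_sum:
  fixes N :: nat
  shows "(\<And>m. m < N \<Longrightarrow> poly6 (f m)) \<Longrightarrow> poly6 (\<lambda>k. \<Sum>m<N. f m k)"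
proof (induction N)
  case 0
  thus ?case using poly6_const[of 0] by simp
next
  case (Suc N)
  hence "poly6 (\<lambda>k. (\<Sum>m<N. f m k) + f N k)" by (intro poly6_add) auto
  thus ?case by simp
qed

lemma poly6_monomial_mult:
  assumes "poly6 g"
  shows "poly6 (\<lambda>k. c * (\<Prod>i<6. k i ^ e i) * g k)"
proof -
  from assms obtain N :: nat and c' :: "nat \<Rightarrow> complex" and e' :: "nat \<Rightarrow> nat \<Rightarrow> nat" where
    g: "g = (\<lambda>k. \<Sum>m<N. c' m * (\<Prod>i<6. k i ^ e' m i))"
    unfolding poly6_def by blast
  have "c * (\<Prod>i<6. k i ^ e i) * g k = (\<Sum>m<N. (c * c' m) * (\<Prod>i<6. k i ^ (e' m i + e i)))" for k
    by (simp add: g sum_distrib_left power_add prod.distrib mult_ac)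
  thus ?thesis
    unfolding poly6_def
    by (intro exI[of _ N] exI[of _ "\<lambda>m. c * c' m"] exI[of _ "\<lambda>m i. e' m i + e i"]) (simp add: fun_eq_iff)
qed

lemma poly6_mult:
  assumes "poly6 f" "poly6 g"
  shows "poly6 (\<lambda>k. f k * g k)"
proof -
  from assms(1) obtain N :: nat and c :: "nat \<Rightarrow> complex" and e :: "nat \<Rightarrow> nat \<Rightarrow> nat" where
    f: "f = (\<lambda>k. \<Sum>m<N. c m * (\<Prod>i<6. k i ^ e m i))"
    unfolding poly6_def by blast
  have "poly6 (\<lambda>k. \<Sum>m<N. c m * (\<Prod>i<6. k i ^ e m i) * g k)"
    by (intro poly6_sum poly6_monomial_mult assms(2))
  thus ?thesis by (simp add: f sum_distrib_right)
qed

lemma poly6_uminus: "poly6 f \<Longrightarrow> poly6 (\<lambda>k. - f k)"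
  using poly6_mult[OF poly6_const[of "-1"]] by simp

lemma poly6_diff: "poly6 f \<Longrightarrow> poly6 g \<Longrightarrow> poly6 (\<lambda>k. f k - g k)"
  using poly6_add[of f "\<lambda>k. - g k"] poly6_uminus[of g] by simp

lemma poly6_power: "poly6 f \<Longrightarrow> poly6 (\<lambda>k. f k ^ n)"
  by (induction n) (simp_all add: poly6_const poly6_mult)

lemma sum_lessThan_5: "(\<Sum>j<5. f j) = f 0 + f 1 + f 2 + f 3 + f 4"
  for f :: "nat \<Rightarrow> 'a::comm_monoid_add"
  by (simp add: eval_nat_numeral add.assoc)

lemma less_5_cases: "(i::nat) < 5 \<longleftrightarrow> i = 0 \<or> i = 1 \<or> i = 2 \<or> i = 3 \<or> i = 4"
  by auto

lemma symmetric5_lower_entries: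
  fixes T :: "nat \<Rightarrow> nat \<Rightarrow> 'a"
  assumes "\<forall>i<5. \<forall>j<5. T i j = T j i"
  shows "T 1 0 = T 0 1" "T 2 0 = T 0 2" "T 3 0 = T 0 3" "T 4 0 = T 0 4" "T 2 1 = T 1 2"
    "T 3 1 = T 1 3" "T 4 1 = T 1 4" "T 3 2 = T 2 3" "T 4 2 = T 2 4" "T 4 3 = T 3 4"
  using assms by auto

definition mat_vec :: "(nat \<Rightarrow> nat \<Rightarrow> complex) \<Rightarrow> (nat \<Rightarrow> complex) \<Rightarrow> nat \<Rightarrow> complex" where
  "mat_vec M y = (\<lambda>i. if i < 5 then (\<Sum>j<5. M i j * y j) else 0)"

definition unit_vec :: "nat \<Rightarrow> nat \<Rightarrow> complex" where
  "unit_vec i = (\<lambda>j. if j = i then 1 else 0)"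

lemma pt5_mat_vec: "pt5 (mat_vec M x)"
  by (simp add: pt5_def mat_vec_def)

lemma mat_vec_add: "mat_vec M (\<lambda>i. x i + y i) = (\<lambda>i. mat_vec M x i + mat_vec M y i)"
  by (rule ext) (simp add: mat_vec_def sum.distrib algebra_simps)

lemma mat_vec_lincomb3:
  "mat_vec M (\<lambda>i. a * x i + b * y i + c * z i) = (\<lambda>i. a * mat_vec M x i + b * mat_vec M y i + c * mat_vec M z i)"
  by (rule ext) (simp add: mat_vec_def sum.distrib sum_distrib_left algebra_simps)

definition tuple5 :: "(nat \<Rightarrow> complex) \<Rightarrow> complex \<times> complex \<times> complex \<times> complex \<times> complex" where
  "tuple5 x = (x 0, x 1, x 2, x 3, x 4)"

definition of_tuple5 :: "complex \<times> complex \<times> complex \<times> complex \<times> complex \<Rightarrow> nat \<Rightarrow> complex" where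
  "of_tuple5 p = (case p of (a, b, c, d, e) \<Rightarrow>
     (\<lambda>i. if i = 0 then a else if i = 1 then b else if i = 2 then c else if i = 3 then d
          else if i = 4 then e else 0))"

lemma mat_vec_surj:
  assumes M: "invertible5 M" and y: "pt5 y"
  shows "\<exists>x. mat_vec M x = y"
proof -
  define f where "f = (\<lambda>p. tuple5 (mat_vec M (of_tuple5 p)))"
  have "linear f"
  proof (rule linearI)
    fix p q show "f (p + q) = f p + f q"
      by (cases p; cases q) (simp add: f_def tuple5_def mat_vec_def of_tuple5_def sum_lessThan_5 algebra_simps)
  next
    fix r :: real and p show "f (r *\<^sub>R p) = r *\<^sub>R f p"
      by (cases p)
        (simp add: f_def tuple5_def mat_vec_def of_tuple5_def sum_lessThan_5 algebra_simps scaleR_conv_of_real)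
  qed
  moreover have "inj f"
  proof (rule injI)
    fix p q assume "f p = f q"
    hence "\<forall>i<5. (\<Sum>j<5. M i j * (of_tuple5 p j - of_tuple5 q j)) = 0"
      by (cases p; cases q)
        (simp add: f_def tuple5_def mat_vec_def of_tuple5_def sum_lessThan_5 algebra_simps,
         auto simp: eval_nat_numeral less_Suc_eq algebra_simps)
    hence "\<forall>j<5. of_tuple5 p j - of_tuple5 q j = 0"
      using M[unfolded invertible5_def, rule_format, of "\<lambda>j. of_tuple5 p j - of_tuple5 q j"] by simp
    hence eq: "\<And>j. j < 5 \<Longrightarrow> of_tuple5 p j = of_tuple5 q j" by simp
    show "p = q"
      using eq[of 0] eq[of 1] eq[of 2] eq[of 3] eq[of 4] by (cases p; cases q) (simp add: of_tuple5_def)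
  qed
  ultimately obtain p where "f p = tuple5 y"
    using linear_injective_imp_surjective by (metis surjD)
  hence "\<forall>i<5. mat_vec M (of_tuple5 p) i = y i"
    by (auto simp: f_def tuple5_def eval_nat_numeral less_Suc_eq)
  hence "mat_vec M (of_tuple5 p) = y"
    using y by (auto simp: mat_vec_def pt5_def fun_eq_iff)
  thus ?thesis by blast
qed

lemma bil_add_left: "bil S (\<lambda>i. x i + y i) z = bil S x z + bil S y z"
  by (simp add: bil_def algebra_simps sum.distrib)

lemma bil_add_right: "bil S z (\<lambda>i. x i + y i) = bil S z x + bil S z y"
  by (simp add: bil_def algebra_simps sum.distrib)

lemma bil_commute:
  assumes "\<forall>i<5. \<forall>j<5. S i j = S j i"
  shows "bil S x y = bil S y x"
proof -
  have "bil S x y = (\<Sum>j<5. \<Sum>i<5. S i j * x i * y j)" unfolding bil_def by (rule sum.swap)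
  also have "\<dots> = bil S y x" unfolding bil_def using assms by (intro sum.cong refl) (simp add: mult_ac)
  finally show ?thesis .
qed

lemma bil_unit_vec: "a < 5 \<Longrightarrow> b < 5 \<Longrightarrow> bil S (unit_vec a) (unit_vec b) = S a b"
  by (auto simp: bil_def unit_vec_def sum_lessThan_5 less_5_cases)

lemma bil_eq_0_on_isotropic_subspace:
  assumes sym: "\<forall>i<5. \<forall>j<5. S i j = S j i"
    and isotropic: "\<And>y. V y \<Longrightarrow> bil S y y = 0"
    and add: "\<And>y z. V y \<Longrightarrow> V z \<Longrightarrow> V (\<lambda>i. y i + z i)"
    and "V y" "V z"
  shows "bil S y z = 0"
proof -
  have "bil S (\<lambda>i. y i + z i) (\<lambda>i. y i + z i) = 0" using assms by blast
  hence "bil S y y + bil S y z + (bil S z y + bil S z z) = 0"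
    by (simp add: bil_add_left bil_add_right)
  thus ?thesis using isotropic[OF \<open>V y\<close>] isotropic[OF \<open>V z\<close>] bil_commute[OF sym, of z y] by simp
qed

definition congruent_form :: "(nat \<Rightarrow> nat \<Rightarrow> complex) \<Rightarrow> (nat \<Rightarrow> nat \<Rightarrow> complex) \<Rightarrow> nat \<Rightarrow> nat \<Rightarrow> complex" where
  "congruent_form M S i j = (\<Sum>a<5. \<Sum>b<5. M a i * S a b * M b j)"

lemma bil_mat_vec: "bil S (mat_vec M x) (mat_vec M y) = bil (congruent_form M S) x y"
proof -
  have "bil S (mat_vec M x) (mat_vec M y) = (\<Sum>a<5. \<Sum>b<5. \<Sum>i<5. \<Sum>j<5. M a i * S a b * M b j * x i * y j)"
    by (simp add: bil_def mat_vec_def sum_distrib_left sum_distrib_right mult_ac)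
  also have "\<dots> = (\<Sum>a<5. \<Sum>i<5. \<Sum>b<5. \<Sum>j<5. M a i * S a b * M b j * x i * y j)"
    by (rule sum.cong[OF refl], rule sum.swap)
  also have "\<dots> = (\<Sum>i<5. \<Sum>a<5. \<Sum>b<5. \<Sum>j<5. M a i * S a b * M b j * x i * y j)"
    by (rule sum.swap)
  also have "\<dots> = (\<Sum>i<5. \<Sum>a<5. \<Sum>j<5. \<Sum>b<5. M a i * S a b * M b j * x i * y j)"
    by (rule sum.cong[OF refl], rule sum.cong[OF refl], rule sum.swap)
  also have "\<dots> = (\<Sum>i<5. \<Sum>j<5. \<Sum>a<5. \<Sum>b<5. M a i * S a b * M b j * x i * y j)"
    by (rule sum.cong[OF refl], rule sum.swap)
  also have "\<dots> = bil (congruent_form M S) x y"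
    by (simp add: bil_def congruent_form_def sum_distrib_left sum_distrib_right mult_ac)
  finally show ?thesis .
qed

lemma congruent_form_sym:
  assumes "\<forall>i<5. \<forall>j<5. S i j = S j i"
  shows "\<forall>i<5. \<forall>j<5. congruent_form M S i j = congruent_form M S j i"
proof (intro allI impI)
  fix i j
  have "congruent_form M S i j = (\<Sum>b<5. \<Sum>a<5. M a i * S a b * M b j)"
    unfolding congruent_form_def by (rule sum.swap)
  also have "\<dots> = congruent_form M S j i"
    unfolding congruent_form_def using assms by (intro sum.cong refl) (simp add: mult_ac)
  finally show "congruent_form M S i j = congruent_form M S j i" .
qed

lemma congruent_form_zero_imp_zero:
  assumes M: "invertible5 M" and zero: "\<And>x y. bil (congruent_form M S) x y = 0"
    and "a < 5" "b < 5"
  shows "S a b = 0"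
proof -
  have "pt5 (unit_vec i)" if "i < 5" for i using that by (simp add: pt5_def unit_vec_def)
  then obtain x y where "mat_vec M x = unit_vec a" "mat_vec M y = unit_vec b"
    using mat_vec_surj[OF M] \<open>a < 5\<close> \<open>b < 5\<close> by metis
  thus ?thesis
    using zero[of x y] bil_unit_vec[OF \<open>a < 5\<close> \<open>b < 5\<close>] by (simp add: bil_mat_vec[symmetric])
qed

lemma plucker_self: "plucker w w = (\<lambda>_. 0)"
  by (rule ext) (auto simp: plucker_def mult.commute)

lemma plucker_add_right: "plucker u (\<lambda>i. v i + w i) = (\<lambda>p. plucker u v p + plucker u w p)"
  by (rule ext) (auto simp: plucker_def algebra_simps)

lemma plucker_lincomb3_left:
  "plucker (\<lambda>i. a * x i + b * y i + c * z i) w =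
   (\<lambda>p. a * plucker x w p + b * plucker y w p + c * plucker z w p)"
  by (rule ext) (auto simp: plucker_def algebra_simps)

lemma plucker_zero_imp_gram_zero:
  assumes "\<forall>p. plucker u v p = 0"
  shows "bil S u u * bil S v v - (bil S u v)^2 = 0"
proof (cases "\<forall>i<5. u i = 0")
  case True
  hence "bil S u u = 0" "bil S u v = 0" by (simp_all add: bil_def)
  thus ?thesis by simp
next
  case False
  then obtain i where i: "i < 5" "u i \<noteq> 0" by auto
  define c where "c = v i / u i"
  have v: "v j = c * u j" if "j < 5" for j
  proof -
    have "u j * v i = u i * v j"
    proof (cases j i rule: linorder_cases)
      case less
      thus ?thesis using assms[rule_format, of "(j, i)"] i by (simp add: plucker_def)
    next
      case greater
      thus ?thesis using assms[rule_format, of "(i, j)"] that by (simp add: plucker_def)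
    qed simp
    thus ?thesis using i by (simp add: c_def field_simps)
  qed
  have "bil S u v = c * bil S u u" "bil S v v = c^2 * bil S u u"
    unfolding bil_def sum_distrib_left
    by (intro sum.cong refl; simp add: v mult_ac power2_eq_square)+
  thus ?thesis by (simp add: power2_eq_square)
qed

lemma lin_span_zero: "(\<lambda>_. 0) \<in> lin_span X"
  unfolding lin_span_def by (intro CollectI exI[of _ 0]) simp

lemma lin_span_scale: "f \<in> X \<Longrightarrow> (\<lambda>p. c * f p) \<in> lin_span X"
  unfolding lin_span_def by (intro CollectI exI[of _ 1] exI[of _ "\<lambda>_. c"] exI[of _ "\<lambda>_. f"]) simp

lemma lin_span_add:
  assumes "w1 \<in> lin_span X" "w2 \<in> lin_span X"
  shows "(\<lambda>p. w1 p + w2 p) \<in> lin_span X"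
proof -
  from assms obtain n1 n2 :: nat and c1 c2 :: "nat \<Rightarrow> complex" and f1 f2 where
    1: "\<forall>i<n1. f1 i \<in> X" "w1 = (\<lambda>p. \<Sum>i<n1. c1 i * f1 i p)" and
    2: "\<forall>i<n2. f2 i \<in> X" "w2 = (\<lambda>p. \<Sum>i<n2. c2 i * f2 i p)"
    unfolding lin_span_def by blast
  define c where "c = (\<lambda>m. if m < n1 then c1 m else c2 (m - n1))"
  define f where "f = (\<lambda>m. if m < n1 then f1 m else f2 (m - n1))"
  have "\<forall>i<n1 + n2. f i \<in> X" using 1 2 by (auto simp: f_def)
  moreover have "(\<Sum>i<n1 + n2. c i * f i p) = w1 p + w2 p" for p
  proof -
    have "(\<Sum>i<n1 + n2. c i * f i p) = (\<Sum>i\<in>{0..<n1}. c i * f i p) + (\<Sum>i\<in>{n1..<n1+n2}. c i * f i p)"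
      by (simp add: atLeast0LessThan[symmetric] sum.atLeastLessThan_concat)
    also have "(\<Sum>i\<in>{0..<n1}. c i * f i p) = w1 p"
      by (simp add: 1 c_def f_def atLeast0LessThan)
    also have "(\<Sum>i\<in>{n1..<n1+n2}. c i * f i p) = w2 p"
      using sum.shift_bounds_nat_ivl[of "\<lambda>i. c i * f i p" 0 n1 n2]
      by (simp add: 2 c_def f_def atLeast0LessThan add.commute)
    finally show ?thesis .
  qed
  ultimately show ?thesis
    unfolding lin_span_def by (intro CollectI exI[of _ "n1 + n2"] exI[of _ c] exI[of _ f]) (simp add: fun_eq_iff)
qed

section \<open>The standard rational normal quartic\<close>

definition veronese :: "complex \<Rightarrow> complex \<Rightarrow> nat \<Rightarrow> complex" where
  "veronese s t = (\<lambda>j. if j < 5 then s ^ (4 - j) * t ^ j else 0)"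

definition ends_sum :: "nat \<Rightarrow> complex" where
  "ends_sum = (\<lambda>i. veronese 1 0 i + veronese 0 1 i)"

text \<open>In the coordinates y with x = M y the curve B is the image of veronese, and the line V_z
  of z = (a, b, c) is cut out by these Hankel equations (the apolarity conditions for the binary
  quadric of z).  Only the inclusion proved in mat_vec_mem_Vz is needed.\<close>
definition std_span :: "complex \<Rightarrow> complex \<Rightarrow> complex \<Rightarrow> (nat \<Rightarrow> complex) \<Rightarrow> bool" where
  "std_span a b c y \<longleftrightarrow> pt5 y \<and> a * y 0 + b * y 1 + c * y 2 = 0 \<and>
     a * y 1 + b * y 2 + c * y 3 = 0 \<and> a * y 2 + b * y 3 + c * y 4 = 0"

lemma rnq_map_eq_mat_vec: "rnq_map M s t = mat_vec M (veronese s t)"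
  by (rule ext) (simp add: rnq_map_def mat_vec_def veronese_def mult.assoc)

lemma std_span_veronese:
  assumes "a * s^2 + b * s * t + c * t^2 = 0"
  shows "std_span a b c (veronese s t)"
proof -
  have "s^2 * (a * s^2 + b * s * t + c * t^2) = 0" "s * t * (a * s^2 + b * s * t + c * t^2) = 0"
    "t^2 * (a * s^2 + b * s * t + c * t^2) = 0"
    using assms by simp_all
  thus ?thesis
    by (simp add: std_span_def pt5_def veronese_def eval_nat_numeral algebra_simps)
qed

lemma std_span_add:
  assumes "std_span a b c y" "std_span a b c z"
  shows "std_span a b c (\<lambda>i. y i + z i)"
proof -
  have "a * (y i + z i) + b * (y j + z j) + c * (y l + z l) =
      (a * y i + b * y j + c * y l) + (a * z i + b * z j + c * z l)" for i j l
    by (simp add: algebra_simps)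
  note regroup = this
  show ?thesis using assms unfolding std_span_def pt5_def by (simp only: regroup) simp
qed

lemma poly_degree_le_2:
  fixes r :: "'a::zero poly"
  assumes "degree r \<le> 2"
  shows "r = [:coeff r 0, coeff r 1, coeff r 2:]"
proof (rule poly_eqI)
  fix n show "coeff r n = coeff [:coeff r 0, coeff r 1, coeff r 2:] n"
  proof (cases "n \<le> 2")
    case True
    thus ?thesis by (auto simp: le_Suc_eq numeral_2_eq_2 coeff_pCons split: nat.splits)
  next
    case False
    hence "coeff r n = 0" using assms by (intro coeff_eq_0) auto
    moreover have "coeff [:coeff r 0, coeff r 1, coeff r 2:] n = 0"
      using False by (cases n; cases "n - 1"; cases "n - 2") (auto simp: coeff_pCons numeral_2_eq_2 split: nat.splits)
    ultimately show ?thesis by simp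
  qed
qed

lemma mat_vec_mem_Vz:
  assumes "std_span a b c y"
  shows "mat_vec M y \<in> Vz M (a, b, c)"
proof -
  have "lin5 h (mat_vec M y) = 0" if "form_dvd [:a, b, c:] (pullback M h)" for h
  proof -
    from that obtain r where r: "degree r \<le> 2" "pullback M h = [:a, b, c:] * r"
      unfolding form_dvd_def by blast
    define r0 r1 r2 where "r0 = coeff r 0" and "r1 = coeff r 1" and "r2 = coeff r 2"
    have "pullback M h = [:a, b, c:] * [:r0, r1, r2:]"
      using r poly_degree_le_2 unfolding r0_def r1_def r2_def by metis
    also have "\<dots> = [:a*r0, a*r1 + b*r0, a*r2 + b*r1 + c*r0, b*r2 + c*r1, c*r2:]"
      by (simp add: algebra_simps)
    finally have pullback: "pullback M h = [:a*r0, a*r1 + b*r0, a*r2 + b*r1 + c*r0, b*r2 + c*r1, c*r2:]" .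
    have coeff_pullback: "coeff (pullback M h) j = (\<Sum>i<5. h i * M i j)" if "j < 5" for j
      using that by (simp add: pullback_def nth_default_def)
    have "lin5 h (mat_vec M y) = (\<Sum>i<5. \<Sum>j<5. h i * M i j * y j)"
      unfolding lin5_def mat_vec_def by (simp add: sum_distrib_left mult.assoc)
    also have "\<dots> = (\<Sum>j<5. \<Sum>i<5. h i * M i j * y j)"
      by (rule sum.swap)
    also have "\<dots> = (\<Sum>j<5. coeff (pullback M h) j * y j)"
      by (rule sum.cong[OF refl]) (simp add: coeff_pullback sum_distrib_right)
    also have "\<dots> = r0 * (a * y 0 + b * y 1 + c * y 2) + r1 * (a * y 1 + b * y 2 + c * y 3)
        + r2 * (a * y 2 + b * y 3 + c * y 4)"
      unfolding pullback sum_lessThan_5 by (simp add: eval_nat_numeral) algebra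
    also have "\<dots> = 0" using assms by (simp add: std_span_def)
    finally show ?thesis .
  qed
  thus ?thesis using pt5_mat_vec by (simp add: Vz_def)
qed

lemma plucker_mem_lin_span_Acurve:
  assumes "(a, b, c) \<in> Defs.conic k" "std_span a b c y" "std_span a b c z"
  shows "(\<lambda>p. d * plucker (mat_vec M y) (mat_vec M z) p) \<in> lin_span (Acurve M k)"
proof (cases "\<exists>p. plucker (mat_vec M y) (mat_vec M z) p \<noteq> 0")
  case True
  hence "plucker (mat_vec M y) (mat_vec M z) \<in> Zpt M (a, b, c)"
    unfolding Zpt_def using mat_vec_mem_Vz[OF assms(2)] mat_vec_mem_Vz[OF assms(3)] by blast
  hence "plucker (mat_vec M y) (mat_vec M z) \<in> Acurve M k"
    unfolding Acurve_def using assms(1) by blast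
  thus ?thesis by (rule lin_span_scale)
next
  case False
  hence "(\<lambda>p. d * plucker (mat_vec M y) (mat_vec M z) p) = (\<lambda>_. 0)" by auto
  thus ?thesis using lin_span_zero by simp
qed

section \<open>The quadric determined by a general conic\<close>

definition conic_quadric :: "(nat \<Rightarrow> complex) \<Rightarrow> nat \<Rightarrow> nat \<Rightarrow> complex" where
  "conic_quadric k i j = (if i < 5 \<and> j < 5 then
     [[0, 0, k 2, - k 5, k 1],
      [0, -2 * k 2, k 5, k 4, - k 3],
      [k 2, k 5, -2 * k 4 - 2 * k 1, k 3, k 0],
      [- k 5, k 4, k 3, -2 * k 0, 0],
      [k 1, - k 3, k 0, 0, 0]] ! i ! j else 0)"

text \<open>The common point of the plane spanned by the two lines of A through veronese 1 0 and the
  plane spanned by the two lines of A through veronese 0 1.\<close>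
definition conic_point :: "(nat \<Rightarrow> complex) \<Rightarrow> nat \<Rightarrow> complex" where
  "conic_point k = (let y1 = k 1 * k 3 - k 0 * k 5; y2 = k 1 ^ 2 - k 0 * k 2; y3 = k 1 * k 5 - k 2 * k 3 in
     (\<lambda>j. if j < 5 then [k 3 * y1 - k 0 * y2, k 1 * y1, k 1 * y2, k 1 * y3, k 5 * y3 - k 2 * y2] ! j else 0))"

text \<open>The factors say: the conic meets the lines a = 0 and c = 0 of P^2 in two distinct points
  each, none of them a vertex of the coordinate triangle; it meets the line a + b + c = 0 (the
  divisors through veronese 1 1) in a point (w, -(1 + w), 1) with w \<noteq> 0, 1; and the quadric is
  non-degenerate on the line through conic_point k and ends_sum.\<close>
definition conic_generic :: "(nat \<Rightarrow> complex) \<Rightarrow> complex" where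
  "conic_generic k = k 0 * k 1 * k 2 * (k 5 ^ 2 - 4 * k 1 * k 2) * (k 3 ^ 2 - 4 * k 0 * k 1)
     * (k 0 + k 1 - k 3) * (k 1 + k 2 - k 5) * (k 0 + 4 * k 1 + k 2 - 2 * k 3 + k 4 - 2 * k 5)
     * bil (conic_quadric k) (conic_point k) (conic_point k)"

definition conic_lines_isotropic :: "(nat \<Rightarrow> nat \<Rightarrow> complex) \<Rightarrow> (nat \<Rightarrow> complex) \<Rightarrow> bool" where
  "conic_lines_isotropic T k \<longleftrightarrow>
     (\<forall>a b c y z. (a, b, c) \<in> Defs.conic k \<longrightarrow> std_span a b c y \<longrightarrow> std_span a b c z \<longrightarrow> bil T y z = 0)"

lemma conic_generic_nonzeroD:
  assumes "conic_generic k \<noteq> 0"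
  shows "k 0 \<noteq> 0" "k 1 \<noteq> 0" "k 2 \<noteq> 0" "(- k 5)^2 - 4 * k 1 * k 2 \<noteq> 0" "(- k 3)^2 - 4 * k 1 * k 0 \<noteq> 0"
    "k 0 + k 1 - k 3 \<noteq> 0" "k 1 + k 2 - k 5 \<noteq> 0" "k 0 + 4 * k 1 + k 2 - 2 * k 3 + k 4 - 2 * k 5 \<noteq> 0"
    "bil (conic_quadric k) (conic_point k) (conic_point k) \<noteq> 0"
  using assms by (auto simp: conic_generic_def mult_ac)

lemma poly6_bil:
  assumes "\<And>i j. poly6 (\<lambda>k. S k i j)" "\<And>i. poly6 (\<lambda>k. x k i)" "\<And>i. poly6 (\<lambda>k. y k i)"
  shows "poly6 (\<lambda>k. bil (S k) (x k) (y k))"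
  unfolding bil_def by (intro poly6_sum poly6_mult assms)

lemma poly6_conic_quadric: "poly6 (\<lambda>k. conic_quadric k i j)"
  by (cases "i < 5 \<and> j < 5")
    (auto simp: conic_quadric_def less_5_cases
      intro!: poly6_const poly6_coordinate poly6_uminus poly6_mult poly6_diff)

lemma poly6_conic_point: "poly6 (\<lambda>k. conic_point k i)"
  by (cases "i < 5")
    (auto simp: conic_point_def Let_def less_5_cases
      intro!: poly6_const poly6_coordinate poly6_power poly6_mult poly6_diff)

lemma poly6_conic_generic: "poly6 conic_generic"
proof -
  have "poly6 (\<lambda>k. conic_generic k)"
    unfolding conic_generic_def
    by (intro poly6_mult poly6_add poly6_diff poly6_power poly6_coordinate poly6_const
        poly6_bil poly6_conic_quadric poly6_conic_point) simp_all
  thus ?thesis by simp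
qed

lemma conic_generic_example: "conic_generic (\<lambda>i. [1, 2, 3, 4, 5, 6] ! i) \<noteq> 0"
  by (simp add: conic_generic_def bil_def sum_lessThan_5 conic_quadric_def conic_point_def Let_def)

lemma isotropic_veronese_coeffs:
  fixes T :: "nat \<Rightarrow> nat \<Rightarrow> complex"
  assumes sym: "\<forall>i<5. \<forall>j<5. T i j = T j i" and iso: "\<forall>t. bil T (veronese 1 t) (veronese 1 t) = 0"
  shows "T 0 0 = 0" "T 0 1 = 0" "T 1 1 = - 2 * T 0 2" "T 1 2 = - T 0 3"
    "T 2 2 = - 2 * T 0 4 - 2 * T 1 3" "T 2 3 = - T 1 4" "T 3 3 = - 2 * T 2 4" "T 3 4 = 0" "T 4 4 = 0"
proof -
  define cs where "cs = [T 0 0, T 0 1 + T 1 0, T 0 2 + T 1 1 + T 2 0,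
    T 0 3 + T 1 2 + T 2 1 + T 3 0, T 0 4 + T 1 3 + T 2 2 + T 3 1 + T 4 0,
    T 1 4 + T 2 3 + T 3 2 + T 4 1, T 2 4 + T 3 3 + T 4 2, T 3 4 + T 4 3, T 4 4]"
  have "poly (Poly cs) t = bil T (veronese 1 t) (veronese 1 t)" for t
    by (simp add: cs_def bil_def sum_lessThan_5 veronese_def eval_nat_numeral) algebra
  hence "Poly cs = 0" using iso poly_all_0_iff_0 by auto
  hence "nth_default 0 cs n = 0" for n
    by (metis coeff_Poly_eq coeff_0)
  from this[of 0] this[of 1] this[of 2] this[of 3] this[of 4] this[of 5] this[of 6] this[of 7] this[of 8]
  have "T 0 0 = 0 \<and> T 0 1 + T 1 0 = 0 \<and> T 0 2 + T 1 1 + T 2 0 = 0 \<and>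
    T 0 3 + T 1 2 + T 2 1 + T 3 0 = 0 \<and> T 0 4 + T 1 3 + T 2 2 + T 3 1 + T 4 0 = 0 \<and>
    T 1 4 + T 2 3 + T 3 2 + T 4 1 = 0 \<and> T 2 4 + T 3 3 + T 4 2 = 0 \<and> T 3 4 + T 4 3 = 0 \<and> T 4 4 = 0"
    by (simp add: nth_default_def cs_def)
  moreover note symmetric5_lower_entries[OF sym]
  ultimately show "T 0 0 = 0" "T 0 1 = 0" "T 1 1 = - 2 * T 0 2" "T 1 2 = - T 0 3"
    "T 2 2 = - 2 * T 0 4 - 2 * T 1 3" "T 2 3 = - T 1 4" "T 3 3 = - 2 * T 2 4" "T 3 4 = 0" "T 4 4 = 0"
    by algebra+
qed

lemma conic_quadric_eqI:
  fixes T :: "nat \<Rightarrow> nat \<Rightarrow> complex"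
  assumes "\<forall>i<5. \<forall>j<5. T i j = T j i"
    and "T 0 0 = 0" "T 0 1 = 0" "T 1 1 = - 2 * T 0 2" "T 1 2 = - T 0 3"
      "T 2 2 = - 2 * T 0 4 - 2 * T 1 3" "T 2 3 = - T 1 4" "T 3 3 = - 2 * T 2 4" "T 3 4 = 0" "T 4 4 = 0"
    and "T 0 4 = L * k 1" "T 0 3 = L * - k 5" "T 0 2 = L * k 2" "T 1 4 = L * - k 3" "T 2 4 = L * k 0"
      "T 1 3 = L * k 4"
  shows "\<forall>i<5. \<forall>j<5. T i j = L * conic_quadric k i j"
proof (intro allI impI)
  fix i j :: nat assume "i < 5" "j < 5"
  moreover note symmetric5_lower_entries[OF assms(1)]
  moreover have "T 2 2 = L * (-2 * k 4 - 2 * k 1)" using assms(6,11,16) by algebra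
  ultimately show "T i j = L * conic_quadric k i j"
    using assms(2-5,7-) by (auto simp: conic_quadric_def less_5_cases algebra_simps)
qed

lemma conic_mem_a_eq_0: "k 1 * r^2 + - k 5 * r + k 2 = 0 \<Longrightarrow> (0, - r, 1) \<in> Defs.conic k"
  by (simp add: Defs.conic_def) algebra

lemma conic_mem_c_eq_0: "k 1 * r^2 + - k 3 * r + k 0 = 0 \<Longrightarrow> (1, - r, 0) \<in> Defs.conic k"
  by (simp add: Defs.conic_def) algebra

lemma conic_mem_a_b_c_sum_0:
  "(k 0 + k 1 - k 3) * w^2 + (2 * k 1 - k 3 + k 4 - k 5) * w + (k 1 + k 2 - k 5) = 0
   \<Longrightarrow> (w, - (1 + w), 1) \<in> Defs.conic k"
  by (simp add: Defs.conic_def) algebra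

lemma conic_lines_isotropic_veronese:
  assumes "conic_lines_isotropic T k" "(a, b, c) \<in> Defs.conic k"
    and "a * s^2 + b * s * t + c * t^2 = 0" "a * s'^2 + b * s' * t' + c * t'^2 = 0"
  shows "bil T (veronese s t) (veronese s' t') = 0"
  using assms std_span_veronese unfolding conic_lines_isotropic_def by blast

lemma conic_lines_isotropic_row_0:
  fixes T :: "nat \<Rightarrow> nat \<Rightarrow> complex"
  assumes iso: "conic_lines_isotropic T k" and gen: "conic_generic k \<noteq> 0"
    and T: "T 0 0 = 0" "T 0 1 = 0"
  shows "T 0 3 = T 0 4 / k 1 * - k 5" "T 0 2 = T 0 4 / k 1 * k 2"
proof -
  note k = conic_generic_nonzeroD[OF gen]
  obtain r1 r2 where r: "r1 \<noteq> r2" "r1 \<noteq> 0" "r2 \<noteq> 0"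
    "k 1 * r1^2 + - k 5 * r1 + k 2 = 0" "k 1 * r2^2 + - k 5 * r2 + k 2 = 0"
    using complex_quadratic_two_nonzero_roots[of "k 1" "- k 5" "k 2"] k by blast
  have row: "T 0 4 * r^2 + T 0 3 * r + T 0 2 = 0" if "k 1 * r^2 + - k 5 * r + k 2 = 0" "r \<noteq> 0" for r
  proof -
    have "bil T (veronese 1 0) (veronese 1 r) = 0"
      by (rule conic_lines_isotropic_veronese[OF iso conic_mem_a_eq_0[OF that(1)]])
        (simp_all add: power2_eq_square)
    hence "r^2 * (T 0 4 * r^2 + T 0 3 * r + T 0 2) = 0"
      using T by (simp add: bil_def sum_lessThan_5 veronese_def eval_nat_numeral algebra_simps)
    thus ?thesis using that(2) by simp
  qed
  show "T 0 3 = T 0 4 / k 1 * - k 5" "T 0 2 = T 0 4 / k 1 * k 2"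
    using quadratics_with_common_roots_proportional[OF k(2) r(1,4,5) row[OF r(4,2)] row[OF r(5,3)]] .
qed

lemma conic_lines_isotropic_row_4:
  fixes T :: "nat \<Rightarrow> nat \<Rightarrow> complex"
  assumes iso: "conic_lines_isotropic T k" and gen: "conic_generic k \<noteq> 0"
    and sym: "\<forall>i<5. \<forall>j<5. T i j = T j i" and T: "T 3 4 = 0" "T 4 4 = 0"
  shows "T 1 4 = T 0 4 / k 1 * - k 3" "T 2 4 = T 0 4 / k 1 * k 0"
proof -
  note k = conic_generic_nonzeroD[OF gen]
  obtain r1 r2 where r: "r1 \<noteq> r2" "r1 \<noteq> 0" "r2 \<noteq> 0"
    "k 1 * r1^2 + - k 3 * r1 + k 0 = 0" "k 1 * r2^2 + - k 3 * r2 + k 0 = 0"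
    using complex_quadratic_two_nonzero_roots[of "k 1" "- k 3" "k 0"] k by (auto simp: mult_ac)
  have row: "T 0 4 * r^2 + T 1 4 * r + T 2 4 = 0" if "k 1 * r^2 + - k 3 * r + k 0 = 0" "r \<noteq> 0" for r
  proof -
    have "bil T (veronese 0 1) (veronese r 1) = 0"
      by (rule conic_lines_isotropic_veronese[OF iso conic_mem_c_eq_0[OF that(1)]])
        (simp_all add: power2_eq_square)
    hence "r^2 * (T 0 4 * r^2 + T 1 4 * r + T 2 4) = 0"
      using T symmetric5_lower_entries[OF sym]
      by (simp add: bil_def sum_lessThan_5 veronese_def eval_nat_numeral algebra_simps)
    thus ?thesis using that(2) by simp
  qed
  show "T 1 4 = T 0 4 / k 1 * - k 3" "T 2 4 = T 0 4 / k 1 * k 0"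
    using quadratics_with_common_roots_proportional[OF k(2) r(1,4,5) row[OF r(4,2)] row[OF r(5,3)]] .
qed

lemma conic_lines_isotropic_imp_conic_quadric:
  fixes T :: "nat \<Rightarrow> nat \<Rightarrow> complex"
  assumes sym: "\<forall>i<5. \<forall>j<5. T i j = T j i"
    and quartic: "\<forall>t. bil T (veronese 1 t) (veronese 1 t) = 0"
    and iso: "conic_lines_isotropic T k" and gen: "conic_generic k \<noteq> 0"
  shows "\<forall>i<5. \<forall>j<5. T i j = T 0 4 / k 1 * conic_quadric k i j"
proof -
  note k = conic_generic_nonzeroD[OF gen]
  note T = isotropic_veronese_coeffs[OF sym quartic]
  define L where "L = T 0 4 / k 1"
  have T04: "T 0 4 = L * k 1" using k by (simp add: L_def)
  note row0 = conic_lines_isotropic_row_0[OF iso gen T(1,2), folded L_def]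
  note row4 = conic_lines_isotropic_row_4[OF iso gen sym T(8,9), folded L_def]
  obtain w where w: "(k 0 + k 1 - k 3) * w^2 + (2 * k 1 - k 3 + k 4 - k 5) * w + (k 1 + k 2 - k 5) = 0"
    using complex_quadratic_root k(6) by blast
  have "w \<noteq> 0" using w k(7) by auto
  have "w \<noteq> 1"
  proof
    assume "w = 1"
    hence "k 0 + 4 * k 1 + k 2 - 2 * k 3 + k 4 - 2 * k 5 = 0" using w by (simp add: algebra_simps)
    thus False using k(8) by simp
  qed
  have "bil T (veronese 1 1) (veronese 1 w) = 0"
    by (rule conic_lines_isotropic_veronese[OF iso conic_mem_a_b_c_sum_0[OF w]])
      (simp_all add: power2_eq_square algebra_simps)
  hence "(\<Sum>i<5. \<Sum>j<5. T i j * w ^ j) = 0" by (simp add: bil_def veronese_def)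
  moreover note symmetric5_lower_entries[OF sym]
  ultimately have "(T 1 3 - L * k 4) * (w * (w - 1)^2) = 0"
    using w T T04 row0 row4 by (simp add: sum_lessThan_5 eval_nat_numeral) algebra
  hence "T 1 3 = L * k 4" using \<open>w \<noteq> 0\<close> \<open>w \<noteq> 1\<close> by simp
  thus ?thesis unfolding L_def[symmetric] using conic_quadric_eqI[OF sym T T04 row0 row4] by simp
qed

lemma quadric_containing_R_eq_conic_quadric:
  assumes M: "invertible5 M" and S: "quadric S" and B: "rnq M \<subseteq> Qset S"
    and R: "Rprime M k \<subseteq> Qset S" and gen: "conic_generic k \<noteq> 0"
  obtains L where "L \<noteq> 0" "\<And>x y. bil S (mat_vec M x) (mat_vec M y) = L * bil (conic_quadric k) x y"
proof -
  define T where "T = congruent_form M S"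
  have "\<forall>i<5. \<forall>j<5. S i j = S j i" using S by (simp add: quadric_def)
  hence sym: "\<forall>i<5. \<forall>j<5. T i j = T j i" unfolding T_def by (rule congruent_form_sym)
  have quartic: "\<forall>t. bil T (veronese 1 t) (veronese 1 t) = 0"
  proof
    fix t
    have "rnq_map M 1 t \<in> Qset S" using B unfolding rnq_def by blast
    thus "bil T (veronese 1 t) (veronese 1 t) = 0"
      by (simp add: Qset_def rnq_map_eq_mat_vec bil_mat_vec T_def)
  qed
  have iso: "conic_lines_isotropic T k"
    unfolding conic_lines_isotropic_def
  proof (intro allI impI)
    fix a b c y z assume z: "(a, b, c) \<in> Defs.conic k" and "std_span a b c y" "std_span a b c z"
    have iso_x: "bil T x x = 0" if "std_span a b c x" for x
    proof -
      have "mat_vec M x \<in> Rprime M k" using mat_vec_mem_Vz[OF that] z unfolding Rprime_def by blast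
      thus ?thesis using R by (auto simp: Qset_def bil_mat_vec T_def)
    qed
    show "bil T y z = 0"
      by (rule bil_eq_0_on_isotropic_subspace[where V = "std_span a b c"])
        (fact sym iso_x std_span_add \<open>std_span a b c y\<close> \<open>std_span a b c z\<close>)+
  qed
  define L where "L = T 0 4 / k 1"
  have T: "T i j = L * conic_quadric k i j" if "i < 5" "j < 5" for i j
    using conic_lines_isotropic_imp_conic_quadric[OF sym quartic iso gen] that unfolding L_def by blast
  have bilS: "bil S (mat_vec M x) (mat_vec M y) = L * bil (conic_quadric k) x y" for x y
    unfolding bil_mat_vec T_def[symmetric] unfolding bil_def sum_distrib_left
    by (intro sum.cong refl) (simp add: T mult_ac)
  have "L \<noteq> 0"
  proof
    assume "L = 0"
    hence "bil (congruent_form M S) x y = 0" for x y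
      using bilS[of x y] by (simp only: bil_mat_vec) simp
    hence "S a b = 0" if "a < 5" "b < 5" for a b
      using congruent_form_zero_imp_zero[OF M _ that] by blast
    thus False using S by (auto simp: quadric_def)
  qed
  show ?thesis using \<open>L \<noteq> 0\<close> bilS by (rule that)
qed

section \<open>A line of the span of A that is not tangent to Q\<close>

lemma conic_point_recurrences:
  "pt5 (conic_point k)"
  "k 1 * conic_point k 3 + - k 5 * conic_point k 2 + k 2 * conic_point k 1 = 0"
  "k 1 * conic_point k 4 + - k 5 * conic_point k 3 + k 2 * conic_point k 2 = 0"
  "k 1 * conic_point k 1 + - k 3 * conic_point k 2 + k 0 * conic_point k 3 = 0"
  "k 1 * conic_point k 0 + - k 3 * conic_point k 1 + k 0 * conic_point k 2 = 0"
  by (simp_all add: conic_point_def Let_def pt5_def) algebra+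

lemma bil_conic_quadric_point_ends_sum: "bil (conic_quadric k) (conic_point k) ends_sum = 0"
  by (simp add: bil_def sum_lessThan_5 conic_quadric_def conic_point_def ends_sum_def veronese_def Let_def)
    algebra

lemma bil_conic_quadric_ends_sum: "bil (conic_quadric k) ends_sum ends_sum = 2 * k 1"
  by (simp add: bil_def sum_lessThan_5 conic_quadric_def ends_sum_def veronese_def)

lemma veronese_plane_through_1_0:
  fixes a b c r1 r2 :: complex
  assumes "a \<noteq> 0" "r1 \<noteq> r2" "r1 \<noteq> 0" "r2 \<noteq> 0" "a * r1^2 + b * r1 + c = 0" "a * r2^2 + b * r2 + c = 0"
    and P: "pt5 P" "a * P 3 + b * P 2 + c * P 1 = 0" "a * P 4 + b * P 3 + c * P 2 = 0"
  obtains c0 p1 p2 where "P = (\<lambda>i. c0 * veronese 1 0 i + p1 * veronese 1 r1 i + p2 * veronese 1 r2 i)"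
proof -
  obtain p1 p2 where p: "P 1 = p1 * r1 + p2 * r2" "P 2 = p1 * r1^2 + p2 * r2^2"
    "P 3 = p1 * r1^3 + p2 * r2^3" "P 4 = p1 * r1^4 + p2 * r2^4"
    using order2_recurrence_closed_form[OF assms(1-6) P(2,3)] by blast
  have "P = (\<lambda>i. (P 0 - p1 - p2) * veronese 1 0 i + p1 * veronese 1 r1 i + p2 * veronese 1 r2 i)"
  proof
    fix i :: nat
    consider "i = 0" | "i = 1" | "i = 2" | "i = 3" | "i = 4" | "i \<ge> 5" by linarith
    thus "P i = (P 0 - p1 - p2) * veronese 1 0 i + p1 * veronese 1 r1 i + p2 * veronese 1 r2 i"
      by cases (use p P(1) in \<open>auto simp: veronese_def pt5_def\<close>)
  qed
  thus ?thesis by (rule that)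
qed

lemma veronese_plane_through_0_1:
  fixes a b c r1 r2 :: complex
  assumes "a \<noteq> 0" "r1 \<noteq> r2" "r1 \<noteq> 0" "r2 \<noteq> 0" "a * r1^2 + b * r1 + c = 0" "a * r2^2 + b * r2 + c = 0"
    and P: "pt5 P" "a * P 1 + b * P 2 + c * P 3 = 0" "a * P 0 + b * P 1 + c * P 2 = 0"
  obtains c0 p1 p2 where "P = (\<lambda>i. c0 * veronese 0 1 i + p1 * veronese r1 1 i + p2 * veronese r2 1 i)"
proof -
  define x where "x n = P (4 - n)" for n
  have "a * x 3 + b * x 2 + c * x 1 = 0" "a * x 4 + b * x 3 + c * x 2 = 0"
    using P by (simp_all add: x_def)
  then obtain p1 p2 where "x 1 = p1 * r1 + p2 * r2" "x 2 = p1 * r1^2 + p2 * r2^2"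
    "x 3 = p1 * r1^3 + p2 * r2^3" "x 4 = p1 * r1^4 + p2 * r2^4"
    by (rule order2_recurrence_closed_form[OF assms(1-6)])
  hence p: "P 3 = p1 * r1 + p2 * r2" "P 2 = p1 * r1^2 + p2 * r2^2"
    "P 1 = p1 * r1^3 + p2 * r2^3" "P 0 = p1 * r1^4 + p2 * r2^4"
    by (simp_all add: x_def)
  have "P = (\<lambda>i. (P 4 - p1 - p2) * veronese 0 1 i + p1 * veronese r1 1 i + p2 * veronese r2 1 i)"
  proof
    fix i :: nat
    consider "i = 0" | "i = 1" | "i = 2" | "i = 3" | "i = 4" | "i \<ge> 5" by linarith
    thus "P i = (P 4 - p1 - p2) * veronese 0 1 i + p1 * veronese r1 1 i + p2 * veronese r2 1 i"
      by cases (use p P(1) in \<open>auto simp: veronese_def pt5_def\<close>)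
  qed
  thus ?thesis by (rule that)
qed

lemma witness_line_in_span_Acurve:
  assumes gen: "conic_generic k \<noteq> 0"
  shows "plucker (mat_vec M (conic_point k)) (mat_vec M ends_sum) \<in> lin_span (Acurve M k)"
proof -
  note k = conic_generic_nonzeroD[OF gen]
  define P where "P = mat_vec M (conic_point k)"
  obtain r1 r2 where r: "r1 \<noteq> r2" "r1 \<noteq> 0" "r2 \<noteq> 0"
    "k 1 * r1^2 + - k 5 * r1 + k 2 = 0" "k 1 * r2^2 + - k 5 * r2 + k 2 = 0"
    using complex_quadratic_two_nonzero_roots[of "k 1" "- k 5" "k 2"] k by blast
  obtain q1 q2 where q: "q1 \<noteq> q2" "q1 \<noteq> 0" "q2 \<noteq> 0"
    "k 1 * q1^2 + - k 3 * q1 + k 0 = 0" "k 1 * q2^2 + - k 3 * q2 + k 0 = 0"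
    using complex_quadratic_two_nonzero_roots[of "k 1" "- k 3" "k 0"] k by (auto simp: mult_ac)
  obtain c0 p1 p2 where
    P0: "conic_point k = (\<lambda>i. c0 * veronese 1 0 i + p1 * veronese 1 r1 i + p2 * veronese 1 r2 i)"
    using veronese_plane_through_1_0[OF k(2) r conic_point_recurrences(1-3)] by blast
  obtain d0 s1 s2 where
    P4: "conic_point k = (\<lambda>i. d0 * veronese 0 1 i + s1 * veronese q1 1 i + s2 * veronese q2 1 i)"
    using veronese_plane_through_0_1[OF k(2) q conic_point_recurrences(1,4,5)] by blast
  have line0: "(\<lambda>p. c * plucker (mat_vec M (veronese 1 r)) (mat_vec M (veronese 1 0)) p) \<in> lin_span (Acurve M k)"
    if "k 1 * r^2 + - k 5 * r + k 2 = 0" for r c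
    by (rule plucker_mem_lin_span_Acurve[OF conic_mem_a_eq_0[OF that]]; rule std_span_veronese)
      (simp_all add: power2_eq_square)
  have line4: "(\<lambda>p. c * plucker (mat_vec M (veronese r 1)) (mat_vec M (veronese 0 1)) p) \<in> lin_span (Acurve M k)"
    if "k 1 * r^2 + - k 3 * r + k 0 = 0" for r c
    by (rule plucker_mem_lin_span_Acurve[OF conic_mem_c_eq_0[OF that]]; rule std_span_veronese)
      (simp_all add: power2_eq_square)
  have "plucker P (mat_vec M (veronese 1 0)) =
      (\<lambda>p. p1 * plucker (mat_vec M (veronese 1 r1)) (mat_vec M (veronese 1 0)) p
        + p2 * plucker (mat_vec M (veronese 1 r2)) (mat_vec M (veronese 1 0)) p)"
    unfolding P_def by (subst P0, simp only: mat_vec_lincomb3 plucker_lincomb3_left plucker_self) simp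
  moreover have "plucker P (mat_vec M (veronese 0 1)) =
      (\<lambda>p. s1 * plucker (mat_vec M (veronese q1 1)) (mat_vec M (veronese 0 1)) p
        + s2 * plucker (mat_vec M (veronese q2 1)) (mat_vec M (veronese 0 1)) p)"
    unfolding P_def by (subst P4, simp only: mat_vec_lincomb3 plucker_lincomb3_left plucker_self) simp
  ultimately have "plucker P (mat_vec M ends_sum) \<in> lin_span (Acurve M k)"
    unfolding ends_sum_def mat_vec_add plucker_add_right
    by (simp only:) (intro lin_span_add line0 line4 r(4,5) q(4,5))
  thus ?thesis by (simp add: P_def)
qed

theorem lemma6p1:
  fixes M :: "nat \<Rightarrow> nat \<Rightarrow> complex"
  assumes "invertible5 M"
  shows "general_conic (\<lambda>k. \<forall>S. quadric S \<and> rnq M \<subseteq> Qset S \<and>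
            Rprime M k = SecB M \<inter> Qset S \<longrightarrow>
            (\<exists>u v. pt5 u \<and> pt5 v \<and> (\<exists>p. plucker u v p \<noteq> 0) \<and>
                   plucker u v \<in> lin_span (Acurve M k) \<and> \<not> tangent_line S u v))"
proof -
  have "\<exists>u v. pt5 u \<and> pt5 v \<and> (\<exists>p. plucker u v p \<noteq> 0) \<and>
      plucker u v \<in> lin_span (Acurve M k) \<and> \<not> tangent_line S u v"
    if gen: "conic_generic k \<noteq> 0" and S: "quadric S" "rnq M \<subseteq> Qset S" "Rprime M k = SecB M \<inter> Qset S"
    for k S
  proof -
    obtain L where "L \<noteq> 0" and bilS: "\<And>x y. bil S (mat_vec M x) (mat_vec M y) = L * bil (conic_quadric k) x y"
      using quadric_containing_R_eq_conic_quadric[OF assms S(1,2) _ gen] S(3) by blast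
    define u v where "u = mat_vec M (conic_point k)" and "v = mat_vec M ends_sum"
    have "bil S u u * bil S v v - (bil S u v)^2 =
        L^2 * (2 * k 1 * bil (conic_quadric k) (conic_point k) (conic_point k))"
      by (simp add: u_def v_def bilS bil_conic_quadric_point_ends_sum bil_conic_quadric_ends_sum
          power2_eq_square mult_ac)
    hence "\<not> tangent_line S u v"
      using \<open>L \<noteq> 0\<close> conic_generic_nonzeroD[OF gen] by (simp add: tangent_line_def)
    moreover from this have "\<exists>p. plucker u v p \<noteq> 0"
      using plucker_zero_imp_gram_zero unfolding tangent_line_def by blast
    moreover have "plucker u v \<in> lin_span (Acurve M k)"
      unfolding u_def v_def by (rule witness_line_in_span_Acurve[OF gen])
    ultimately show ?thesis using pt5_mat_vec unfolding u_def v_def by blast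
  qed
  thus ?thesis unfolding general_conic_def using poly6_conic_generic conic_generic_example by blast
qed

end
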